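(* Let $(\mathcal{A},\varphi)$ be a non-commutative space and let $(\mathcal{A}_{1,\ell},\mathcal{A}_{1,r})$ and $(\mathcal{A}_{2,\ell},\mathcal{A}_{2,r})$ be pairs of subalgebras of $\mathcal{A}$ which are bi-monotonically independent (in the order $1<2$) with respect to $\varphi$. Let $n\ge 1$, $\chi:\{1,\dots,n\}\to\{\ell,r\}$, $\omega:\{1,\dots,n\}\to\{1,2\}$, and $a_1,\dots,a_n\in\mathcal{A}$ with $a_j\in\mathcal{A}_{\omega(j),\chi(j)}$ for all $j$. Then \[ \varphi(a_1\cdots a_n)=\varphi(a_W)\prod_{\substack{V\in\pi_{\chi,\omega}\\ \omega(V)=2}}\varphi(a_V), \qquad W=\{j\in\{1,\dots,n\}:\omega(j)=1\}. \]
   Context: A non-commutative space $(\mathcal{A},\varphi)$ is a complex algebra $\mathcal{A}$ with a linear functional $\varphi$, with $\varphi(1)=1$ if $\mathcal{A}$ is unital. For algebras $\mathcal{C}_k$, $\sqcup_k\mathcal{C}_k$ denotes the free product without identification of units, $*_k\mathcal{C}_k$ denotes the free product of unital algebras with identification of units, and $\widetilde{\mathcal{C}}=\mathbb{C}1\oplus\mathcal{C}$ denotes the unitization; one has $\widetilde{\mathcal{C}_1}*\widetilde{\mathcal{C}_2}\cong\widetilde{\mathcal{C}_1\sqcup\mathcal{C}_2}$. Notation. For $n\ge1$ and $\chi:\{1,\dots,n\}\to\{\ell,r\}$ with $\chi^{-1}(\{\ell\})=\{i_1<\dots<i_p\}$ and $\chi^{-1}(\{r\})=\{i_{p+1}>\dots>i_n\}$,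 let $\prec_\chi$ be the total order $i_1\prec_\chi i_2\prec_\chi\cdots\prec_\chi i_n$ on $\{1,\dots,n\}$. A $\chi$-interval is a subset of $\{1,\dots,n\}$ which is an interval for $\prec_\chi$. For $V=\{v_1<\dots<v_s\}\subseteq\{1,\dots,n\}$ write $a_V=a_{v_1}\cdots a_{v_s}$ (product in increasing index order) and $(a_1,\dots,a_n)|_V=(a_{v_1},\dots,a_{v_s})$; by convention a functional applied to the empty product equals $1$. For $\omega:\{1,\dots,n\}\to K$, $\pi_{\chi,\omega}$ is the unique partition of $\{1,\dots,n\}$ into blocks $V_1,\dots,V_m$ such that each $V_k$ is a $\chi$-interval, $\max_{\prec_\chi}V_k\prec_\chi\min_{\prec_\chi}V_{k+1}$, $\omega$ is constant on each $V_k$ (value $\omega(V_k)$), and $\omega(V_k)\ne\omega(V_{k+1})$ for $1\le k\le m-1$. c-bi-free product. Given pairs of unital algebras $(\mathcal{B}_{k,\ell},\mathcal{B}_{k,r})_{k\in K}$ and unital linear functionals $\varphi_k,\psi_k$ on $\mathcal{B}_{k,\ell}*\mathcal{B}_{k,r}$, their c-bi-free product $(\varphi,\psi)=*\!*_k(\varphi_k,\psi_k)$ is the unique pair of unital linear functionals on $*_k(\mathcal{B}_{k,\ell}*\mathcal{B}_{k,r})$ restricting to $\varphi_k,\psi_k$ on each $\mathcal{B}_{k,\ell}*\mathcal{B}_{k,r}$ and such that whenever $n\ge1$, $\chi:\{1,\dots,n\}\to\{\ell,r\}$, $\omega:\{1,\dots,n\}\to K$, $b_j\in\mathcal{B}_{\omega(j),\chi(j)}$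 and $\psi(b_V)=0$ for all $V\in\pi_{\chi,\omega}$, then $\psi(b_1\cdots b_n)=0$ and $\varphi(b_1\cdots b_n)=\prod_{V\in\pi_{\chi,\omega}}\varphi(b_V)$. Bi-monotonic product. Let $(\mathcal{A}_{k,\ell},\mathcal{A}_{k,r})$, $k=1,2$, be pairs of algebras with linear functionals $\varphi_k$ on $\mathcal{A}_{k,\ell}\sqcup\mathcal{A}_{k,r}$. Let $\widetilde{\varphi_k}$ be the unital extension of $\varphi_k$ to $\widetilde{\mathcal{A}_{k,\ell}}*\widetilde{\mathcal{A}_{k,r}}\cong\widetilde{\mathcal{A}_{k,\ell}\sqcup\mathcal{A}_{k,r}}$, and $\delta_1$ the unital functional on $\widetilde{\mathcal{A}_{1,\ell}\sqcup\mathcal{A}_{1,r}}$ vanishing on $\mathcal{A}_{1,\ell}\sqcup\mathcal{A}_{1,r}$. Let $(\widetilde\varphi,\widetilde\psi)$ be the c-bi-free product of $(\widetilde{\varphi_1},\delta_1)$ and $(\widetilde{\varphi_2},\widetilde{\varphi_2})$ for the pairs $(\widetilde{\mathcal{A}_{k,\ell}},\widetilde{\mathcal{A}_{k,r}})$, $k=1,2$. The bi-monotonic product $\varphi_1\rhd\!\!\rhd\varphi_2$ is the restriction of $\widetilde\varphi$ to $(\mathcal{A}_{1,\ell}\sqcup\mathcal{A}_{1,r})\sqcup(\mathcal{A}_{2,\ell}\sqcup\mathcal{A}_{2,r})$. Bi-monotonic independence of two pairs. Pairs of subalgebras $(\mathcal{A}_{1,\ell},\mathcal{A}_{1,r}),(\mathcal{A}_{2,\ell},\mathcal{A}_{2,r})$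 of $(\mathcal{A},\varphi)$ are bi-monotonically independent (in the order $1<2$) if $\varphi\circ\iota=\varphi_1\rhd\!\!\rhd\varphi_2$, where $\iota:(\mathcal{A}_{1,\ell}\sqcup\mathcal{A}_{1,r})\sqcup(\mathcal{A}_{2,\ell}\sqcup\mathcal{A}_{2,r})\to\mathcal{A}$ is the homomorphism induced by the inclusions and $\varphi_k=\varphi\circ\iota|_{\mathcal{A}_{k,\ell}\sqcup\mathcal{A}_{k,r}}$. *)

theory Defs
  imports Main "HOL-Library.Complex_Order" Complex_Main
begin

definition calg :: "(complex \<Rightarrow> 'a::ring \<Rightarrow> 'a) \<Rightarrow> bool" where
  "calg smul \<longleftrightarrow> (\<forall>x. smul 1 x = x) \<and>
     (\<forall>c d x y. smul (c * d) x = smul c (smul d x) \<and> smul (c + d) x = smul c x + smul d x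
       \<and> smul c (x + y) = smul c x + smul c y
       \<and> smul c (x * y) = smul c x * y \<and> smul c (x * y) = x * smul c y)"

definition nc_space :: "(complex \<Rightarrow> 'a::ring \<Rightarrow> 'a) \<Rightarrow> ('a \<Rightarrow> complex) \<Rightarrow> bool" where
  "nc_space smul \<phi> \<longleftrightarrow> calg smul \<and> (\<forall>x y. \<phi> (x + y) = \<phi> x + \<phi> y)
     \<and> (\<forall>c x. \<phi> (smul c x) = c * \<phi> x)
     \<and> (\<forall>e. (\<forall>x. e * x = x \<and> x * e = x) \<longrightarrow> \<phi> e = 1)"

definition subalgebra :: "(complex \<Rightarrow> 'a::ring \<Rightarrow> 'a) \<Rightarrow> 'a set \<Rightarrow> bool" where
  "subalgebra smul S \<longleftrightarrow> 0 \<in> S \<and>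
     (\<forall>x\<in>S. \<forall>y\<in>S. x + y \<in> S \<and> x * y \<in> S \<and> (\<forall>c. smul c x \<in> S))"

fun listprod :: "'a::ring list \<Rightarrow> 'a" where
  "listprod [] = 0"
| "listprod [x] = x"
| "listprod (x # y # xs) = x * listprod (y # xs)"

definition aprod :: "(nat \<Rightarrow> 'a::ring) \<Rightarrow> nat set \<Rightarrow> 'a" where
  "aprod a V = listprod (map a (sorted_list_of_set V))"

definition phiprod :: "('a::ring \<Rightarrow> complex) \<Rightarrow> (nat \<Rightarrow> 'a) \<Rightarrow> nat set \<Rightarrow> complex" where
  "phiprod \<phi> a V = (if V = {} then 1 else \<phi> (aprod a V))"

datatype side = Lft | Rgt

definition chi_order :: "(nat \<Rightarrow> side) \<Rightarrow> nat \<Rightarrow> nat list" where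
  "chi_order \<chi> n = filter (\<lambda>i. \<chi> i = Lft) [1..<Suc n] @ rev (filter (\<lambda>i. \<chi> i = Rgt) [1..<Suc n])"

fun runs :: "('b \<Rightarrow> 'c) \<Rightarrow> 'b list \<Rightarrow> 'b list list" where
  "runs f [] = []"
| "runs f (x # xs) = (case runs f xs of
       [] \<Rightarrow> [[x]]
     | g # gs \<Rightarrow> (if f (hd g) = f x then (x # g) # gs else [x] # g # gs))"

text \<open>pi_{chi,omega}: the blocks are the maximal \<prec>_chi-intervals on which omega is constant.\<close>
definition pi_co :: "(nat \<Rightarrow> side) \<Rightarrow> (nat \<Rightarrow> 'k) \<Rightarrow> nat \<Rightarrow> nat set set" where
  "pi_co \<chi> \<omega> n = set (map set (runs \<omega> (chi_order \<chi> n)))"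

text \<open>Elements of the unitization C~ = C1 + A_{k,s} are pairs (lambda, a).
A letter (k, s, (lambda, a)) stands for the element lambda 1 + a of the unitization of
A_{k,s}, viewed in the free product (with identification of units) of all these
unitized algebras.  A word (list of letters) stands for the product of its letters.\<close>
type_synonym 'a letter = "nat \<times> side \<times> (complex \<times> 'a)"

definition umul :: "(complex \<Rightarrow> 'a::ring \<Rightarrow> 'a) \<Rightarrow> complex \<times> 'a \<Rightarrow> complex \<times> 'a \<Rightarrow> complex \<times> 'a" where
  "umul smul x y = (fst x * fst y, smul (fst x) (snd y) + smul (fst y) (snd x) + snd x * snd y)"

definition uadd :: "complex \<times> 'a::ring \<Rightarrow> complex \<times> 'a \<Rightarrow> complex \<times> 'a" where
  "uadd x y = (fst x + fst y, snd x + snd y)"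

definition usmul :: "(complex \<Rightarrow> 'a::ring \<Rightarrow> 'a) \<Rightarrow> complex \<Rightarrow> complex \<times> 'a \<Rightarrow> complex \<times> 'a" where
  "usmul smul c x = (c * fst x, smul c (snd x))"

definition valid_letter :: "nat set \<Rightarrow> (nat \<Rightarrow> side \<Rightarrow> 'a set) \<Rightarrow> 'a letter \<Rightarrow> bool" where
  "valid_letter K A l \<longleftrightarrow> fst l \<in> K \<and> snd (snd (snd l)) \<in> A (fst l) (fst (snd l))"

definition valid_word :: "nat set \<Rightarrow> (nat \<Rightarrow> side \<Rightarrow> 'a set) \<Rightarrow> 'a letter list \<Rightarrow> bool" where
  "valid_word K A w \<longleftrightarrow> (\<forall>l\<in>set w. valid_letter K A l)"

text \<open>A word with no unit component: it stands for an element of the non-unital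
free product of the algebras A_{k,s}.\<close>
definition nonunit_word :: "'a letter list \<Rightarrow> bool" where
  "nonunit_word w \<longleftrightarrow> (\<forall>l\<in>set w. fst (snd (snd l)) = 0)"

text \<open>Unital linear functionals F on the free product (with identification of units)
of the unitized algebras A~_{k,s}, k in K, s in {l, r}, described by their values on words:
the free product is the free algebra on the letters modulo linearity in each letter,
multiplication of adjacent letters from the same algebra and the unit relations, so linear
functionals on it are exactly the functions on words respecting these relations.\<close>
definition wfun :: "nat set \<Rightarrow> (nat \<Rightarrow> side \<Rightarrow> 'a set) \<Rightarrow> (complex \<Rightarrow> 'a::ring \<Rightarrow> 'a)
                    \<Rightarrow> ('a letter list \<Rightarrow> complex) \<Rightarrow> bool" where
  "wfun K A smul F \<longleftrightarrow> F [] = 1 \<and>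
     (\<forall>u v k s x y c. valid_word K A u \<and> valid_word K A v \<and> k \<in> K \<and> snd x \<in> A k s \<and> snd y \<in> A k s
        \<longrightarrow> F (u @ (k, s, umul smul x y) # v) = F (u @ (k, s, x) # (k, s, y) # v)
          \<and> F (u @ (k, s, uadd x y) # v) = F (u @ (k, s, x) # v) + F (u @ (k, s, y) # v)
          \<and> F (u @ (k, s, usmul smul c x) # v) = c * F (u @ (k, s, x) # v)
          \<and> F (u @ (k, s, (1, 0)) # v) = F (u @ v))"

definition chi_of :: "'a letter list \<Rightarrow> nat \<Rightarrow> side" where
  "chi_of w j = fst (snd (w ! (j - 1)))"

definition omega_of :: "'a letter list \<Rightarrow> nat \<Rightarrow> nat" where
  "omega_of w j = fst (w ! (j - 1))"

definition subword :: "'a letter list \<Rightarrow> nat set \<Rightarrow> 'a letter list" where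
  "subword w V = map (\<lambda>j. w ! (j - 1)) (sorted_list_of_set V)"

definition c_bifree :: "nat set \<Rightarrow> (nat \<Rightarrow> side \<Rightarrow> 'a set) \<Rightarrow> (complex \<Rightarrow> 'a::ring \<Rightarrow> 'a)
     \<Rightarrow> ('a letter list \<Rightarrow> complex) \<Rightarrow> ('a letter list \<Rightarrow> complex)
     \<Rightarrow> (nat \<Rightarrow> 'a letter list \<Rightarrow> complex) \<Rightarrow> (nat \<Rightarrow> 'a letter list \<Rightarrow> complex) \<Rightarrow> bool" where
  "c_bifree K A smul \<Phi> \<Psi> phis psis \<longleftrightarrow>
     wfun K A smul \<Phi> \<and> wfun K A smul \<Psi> \<and>
     (\<forall>k\<in>K. wfun {k} A smul (phis k) \<and> wfun {k} A smul (psis k)) \<and>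
     (\<forall>k\<in>K. \<forall>w. valid_word {k} A w \<longrightarrow> \<Phi> w = phis k w \<and> \<Psi> w = psis k w) \<and>
     (\<forall>w. w \<noteq> [] \<and> valid_word K A w \<and>
          (\<forall>V\<in>pi_co (chi_of w) (omega_of w) (length w). \<Psi> (subword w V) = 0)
        \<longrightarrow> \<Psi> w = 0 \<and>
            \<Phi> w = (\<Prod>V\<in>pi_co (chi_of w) (omega_of w) (length w). \<Phi> (subword w V)))"

definition phi_word :: "('a::ring \<Rightarrow> complex) \<Rightarrow> 'a letter list \<Rightarrow> complex" where
  "phi_word \<phi> w = \<phi> (listprod (map (\<lambda>l. snd (snd (snd l))) w))"

text \<open>Bi-monotonic independence of (A 1 Lft, A 1 Rgt), (A 2 Lft, A 2 Rgt) in the order 1 < 2: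
phi o iota equals the restriction of the first component of the c-bi-free product of
(phi1~, delta_1) and (phi2~, phi2~), where phik = phi o iota on A_{k,l} free A_{k,r}.
(The c-bi-free product and the unital extensions are unique, so existence is equivalent to
the paper's definition.)\<close>
definition bimonotone_indep :: "(complex \<Rightarrow> 'a::ring \<Rightarrow> 'a) \<Rightarrow> ('a \<Rightarrow> complex)
                                \<Rightarrow> (nat \<Rightarrow> side \<Rightarrow> 'a set) \<Rightarrow> bool" where
  "bimonotone_indep smul \<phi> A \<longleftrightarrow>
     (\<exists>\<Phi> \<Psi> \<Phi>1 \<Delta>1 \<Phi>2.
        wfun {1} A smul \<Phi>1 \<and> wfun {1} A smul \<Delta>1 \<and> wfun {2} A smul \<Phi>2 \<and>
        (\<forall>w. w \<noteq> [] \<and> valid_word {1} A w \<and> nonunit_word w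
             \<longrightarrow> \<Phi>1 w = phi_word \<phi> w \<and> \<Delta>1 w = 0) \<and>
        (\<forall>w. w \<noteq> [] \<and> valid_word {2} A w \<and> nonunit_word w \<longrightarrow> \<Phi>2 w = phi_word \<phi> w) \<and>
        c_bifree {1, 2} A smul \<Phi> \<Psi>
          (\<lambda>k. if k = 1 then \<Phi>1 else \<Phi>2) (\<lambda>k. if k = 1 then \<Delta>1 else \<Phi>2) \<and>
        (\<forall>w. w \<noteq> [] \<and> valid_word {1, 2} A w \<and> nonunit_word w \<longrightarrow> \<Phi> w = phi_word \<phi> w))"

end

theory Submission
  imports Defs
begin

text \<open>Keep the colour-1 letters \<open>a j\<close> fixed and allow at colour-2 positions arbitrary elements
  \<open>\<lambda> 1 + b\<close> of the unitization. The defect \<open>\<Phi>(b_1\<cdots>b_n) - \<Phi>(b_W) \<Prod>\<^sub>V \<Phi>(b_V)\<close> is affine in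
  each scalar \<open>\<lambda>\<close>, so by induction on the number of non-unit colour-2 letters it does not change
  when the scalars are shifted. Shift them so that \<open>\<Phi>\<close> vanishes on every colour-2 block with a
  non-unit letter, and recolour the colour-2 blocks made of units with colour 1. In the new
  partition every colour-2 block has \<open>\<Psi> = \<Phi> = 0\<close>, and every colour-1 block contains a genuine
  colour-1 letter, so \<open>\<Psi> = \<Delta>1 = 0\<close> there after deleting units. The c-bi-free factorisation
  then kills \<open>\<Phi>(b_1\<cdots>b_n)\<close>, and the product term vanishes as well; so the defect is \<open>0\<close>, which
  for the letters \<open>a j\<close> themselves is the claimed identity.\<close>

section \<open>Maximal runs of constant colour\<close>

lemma runs_eq_Nil_iff [simp]: "runs f xs = [] \<longleftrightarrow> xs = []"
  by (cases xs) (auto split: list.split)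

lemma hd_hd_runs: "xs \<noteq> [] \<Longrightarrow> hd (hd (runs f xs)) = hd xs"
  by (induction xs) (auto split: list.split)

lemma concat_runs [simp]: "concat (runs f xs) = xs"
  by (induction xs) (auto split: list.split)

lemma in_set_runs_iff: "x \<in> set xs \<longleftrightarrow> (\<exists>r\<in>set (runs f xs). x \<in> set r)"
  by (metis concat_runs set_concat UN_iff)

lemma Nil_notin_runs: "[] \<notin> set (runs f xs)"
  by (induction xs) (auto split: list.split)

lemma hd_run_in_run: "r \<in> set (runs f xs) \<Longrightarrow> hd r \<in> set r"
  using Nil_notin_runs by (metis list.set_sel(1))

declare runs.simps(2) [simp del]

lemma runs_Cons_Cons:
  obtains r rs where "runs f (y # ys) = r # rs" "hd r = y"
    and "runs f (x # y # ys) = (if f y = f x then (x # r) # rs else [x] # r # rs)"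
proof -
  obtain r rs where e: "runs f (y # ys) = r # rs"
    by (cases "runs f (y # ys)") auto
  moreover have "hd r = y" using hd_hd_runs[of "y # ys" f] e by simp
  ultimately show thesis using that by (simp add: runs.simps(2))
qed

lemma runs_single [simp]: "runs f [x] = [[x]]"
  by (simp add: runs.simps(2))

lemma runs_constant: "r \<in> set (runs f xs) \<Longrightarrow> y \<in> set r \<Longrightarrow> f y = f (hd r)"
proof (induction xs arbitrary: r y rule: induct_list012)
  case (3 x1 x2 xs)
  obtain r' rs where rs: "runs f (x2 # xs) = r' # rs" "hd r' = x2"
    and e: "runs f (x1 # x2 # xs) = (if f x2 = f x1 then (x1 # r') # rs else [x1] # r' # rs)"
    by (rule runs_Cons_Cons)
  have "f z = f (hd s)" if "s \<in> set (r' # rs)" "z \<in> set s" for s z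
    using "3.IH"(2) that rs(1) by simp
  with 3 rs(2) e show ?case by (fastforce split: if_splits)
qed auto

lemma runs_cong: "(\<And>y. y \<in> set xs \<Longrightarrow> f y = g y) \<Longrightarrow> runs f xs = runs g xs"
proof (induction xs rule: induct_list012)
  case (3 x1 x2 xs)
  obtain r rs where "runs f (x2 # xs) = r # rs" "hd r = x2"
    and "runs f (x1 # x2 # xs) = (if f x2 = f x1 then (x1 # r) # rs else [x1] # r # rs)"
    by (rule runs_Cons_Cons)
  moreover obtain r' rs' where "runs g (x2 # xs) = r' # rs'" "hd r' = x2"
    and "runs g (x1 # x2 # xs) = (if g x2 = g x1 then (x1 # r') # rs' else [x1] # r' # rs')"
    by (rule runs_Cons_Cons)
  ultimately show ?case using 3 by simp
qed auto

lemma runs_disjoint: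
  assumes "distinct xs" "r \<in> set (runs f xs)" "r' \<in> set (runs f xs)" "y \<in> set r" "y \<in> set r'"
  shows "r = r'"
proof -
  have "distinct (concat rs) \<Longrightarrow> r \<in> set rs \<Longrightarrow> r' \<in> set rs \<Longrightarrow> r = r'" for rs :: "'a list list"
    using assms(4,5) by (induction rs) auto
  from this[of "runs f xs"] show ?thesis using assms(1-3) by simp
qed

lemma successively_runs:
  "successively (\<lambda>x y. f x = f y \<longrightarrow> (\<exists>r\<in>set (runs f xs). x \<in> set r \<and> y \<in> set r)) xs"
proof (induction xs rule: induct_list012)
  case (3 x1 x2 xs)
  obtain r rs where rs: "runs f (x2 # xs) = r # rs" "hd r = x2"
    and e: "runs f (x1 # x2 # xs) = (if f x2 = f x1 then (x1 # r) # rs else [x1] # r # rs)"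
    by (rule runs_Cons_Cons)
  have "x2 \<in> set r" using rs hd_run_in_run[of r f "x2 # xs"] by simp
  then have head: "f x1 = f x2 \<longrightarrow> (\<exists>s\<in>set (runs f (x1 # x2 # xs)). x1 \<in> set s \<and> x2 \<in> set s)"
    using e by auto
  have sub: "\<exists>s'\<in>set (runs f (x1 # x2 # xs)). set s \<subseteq> set s'"
    if "s \<in> set (runs f (x2 # xs))" for s
    using that rs(1) e by (auto split: if_splits)
  have "successively (\<lambda>x y. f x = f y \<longrightarrow> (\<exists>s\<in>set (runs f (x1 # x2 # xs)). x \<in> set s \<and> y \<in> set s))
      (x2 # xs)"
    using "3.IH"(2) by (rule successively_mono) (use sub in blast)
  with head show ?case by simp
qed auto

lemma filter_runs_eq:
  assumes "successively (\<lambda>x y. ((P x \<or> P y) \<longrightarrow> (f x = f y \<longleftrightarrow> g x = g y))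
      \<and> (f x = f y \<longrightarrow> P x = P y) \<and> (g x = g y \<longrightarrow> P x = P y)) xs"
  shows "filter (\<lambda>r. P (hd r)) (runs f xs) = filter (\<lambda>r. P (hd r)) (runs g xs)"
  using assms
proof (induction xs rule: induct_list012)
  case (3 x1 x2 xs)
  obtain r rs where r: "runs f (x2 # xs) = r # rs" "hd r = x2"
    and ef: "runs f (x1 # x2 # xs) = (if f x2 = f x1 then (x1 # r) # rs else [x1] # r # rs)"
    by (rule runs_Cons_Cons)
  obtain r' rs' where r': "runs g (x2 # xs) = r' # rs'" "hd r' = x2"
    and eg: "runs g (x1 # x2 # xs) = (if g x2 = g x1 then (x1 # r') # rs' else [x1] # r' # rs')"
    by (rule runs_Cons_Cons)
  have IH: "filter (\<lambda>r. P (hd r)) (r # rs) = filter (\<lambda>r. P (hd r)) (r' # rs')"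
    using "3.IH"(2) "3.prems" r(1) r'(1) by simp
  then have tl: "filter (\<lambda>r. P (hd r)) rs = filter (\<lambda>r. P (hd r)) rs'"
    and hd: "P x2 \<Longrightarrow> r = r'"
    using r(2) r'(2) by (auto split: if_splits)
  have H: "(P x1 \<or> P x2) \<longrightarrow> (f x1 = f x2 \<longleftrightarrow> g x1 = g x2)"
    "f x1 = f x2 \<longrightarrow> P x1 = P x2" "g x1 = g x2 \<longrightarrow> P x1 = P x2"
    using "3.prems" by simp_all
  show ?case
  proof (cases "f x2 = f x1"; cases "g x2 = g x1")
    assume "f x2 = f x1" "g x2 = g x1"
    then show ?thesis using ef eg H tl hd by auto
  next
    assume "f x2 = f x1" "g x2 \<noteq> g x1"
    then show ?thesis using ef eg H tl r(2) r'(2) by auto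
  next
    assume "f x2 \<noteq> f x1" "g x2 = g x1"
    then show ?thesis using ef eg H tl r(2) r'(2) by auto
  next
    assume "f x2 \<noteq> f x1" "g x2 \<noteq> g x1"
    then show ?thesis using ef eg IH by simp
  qed
qed auto

lemma runs_eq_singleton:
  assumes "successively (\<lambda>x y. Q x \<or> Q y \<longrightarrow> f x = f y) xs"
    and "r \<in> set (runs f xs)" "\<forall>z\<in>set r. Q z"
  shows "runs f xs = [r]"
  using assms
proof (induction xs arbitrary: r rule: induct_list012)
  case (3 x1 x2 xs)
  obtain r' rs where r': "runs f (x2 # xs) = r' # rs" "hd r' = x2"
    and e: "runs f (x1 # x2 # xs) = (if f x2 = f x1 then (x1 # r') # rs else [x1] # r' # rs)"
    by (rule runs_Cons_Cons)
  have x2: "x2 \<in> set r'" using r' hd_run_in_run[of r' f "x2 # xs"] by simp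
  have IH: "s \<in> set (r' # rs) \<Longrightarrow> \<forall>z\<in>set s. Q z \<Longrightarrow> r' # rs = [s]" for s
    using "3.IH"(2)[of s] "3.prems"(1) r'(1) by simp
  have Q12: "Q x1 \<or> Q x2 \<longrightarrow> f x1 = f x2" using "3.prems"(1) by simp
  show ?case
  proof (cases "f x2 = f x1")
    case True
    then show ?thesis using "3.prems"(2,3) IH[of r'] IH[of r] e by (auto simp: Cons_eq_append_conv)
  next
    case False
    then show ?thesis using "3.prems"(2,3) IH[of r] e Q12 x2 by auto
  qed
qed auto

section \<open>The blocks of \<open>pi_co\<close> and recolouring\<close>

lemma distinct_chi_order: "distinct (chi_order \<chi> n)"
  by (auto simp: chi_order_def)

lemma set_chi_order: "set (chi_order \<chi> n) = {1..n}"
proof -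
  have "\<chi> i = Lft \<or> \<chi> i = Rgt" for i by (cases "\<chi> i") auto
  then show ?thesis by (auto simp: chi_order_def)
qed

lemma pi_co_cong:
  assumes "\<And>i. i \<in> {1..n} \<Longrightarrow> \<chi> i = \<chi>' i \<and> \<tau> i = \<tau>' i"
  shows "pi_co \<chi> \<tau> n = pi_co \<chi>' \<tau>' n"
proof -
  have "filter (\<lambda>i. \<chi> i = s) [1..<Suc n] = filter (\<lambda>i. \<chi>' i = s) [1..<Suc n]" for s
    using assms by (intro filter_cong) auto
  then have "chi_order \<chi> n = chi_order \<chi>' n" by (simp add: chi_order_def)
  moreover have "runs \<tau> (chi_order \<chi>' n) = runs \<tau>' (chi_order \<chi>' n)"
    using assms by (intro runs_cong) (simp add: set_chi_order)
  ultimately show ?thesis by (simp add: pi_co_def)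
qed

lemma finite_pi_co: "finite (pi_co \<chi> \<tau> n)"
  by (simp add: pi_co_def)

lemma mem_pi_co: "V \<in> pi_co \<chi> \<tau> n \<longleftrightarrow> (\<exists>r\<in>set (runs \<tau> (chi_order \<chi> n)). V = set r)"
  by (auto simp: pi_co_def)

lemma pi_co_subset: "V \<in> pi_co \<chi> \<tau> n \<Longrightarrow> V \<subseteq> {1..n}"
proof -
  assume "V \<in> pi_co \<chi> \<tau> n"
  then obtain r where "r \<in> set (runs \<tau> (chi_order \<chi> n))" "V = set r" by (auto simp: mem_pi_co)
  then have "V \<subseteq> set (chi_order \<chi> n)" by (meson in_set_runs_iff subsetI)
  then show ?thesis by (simp add: set_chi_order)
qed

lemma pi_co_nonempty: "V \<in> pi_co \<chi> \<tau> n \<Longrightarrow> V \<noteq> {}"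
  using Nil_notin_runs by (auto simp: mem_pi_co)

lemma pi_co_disjoint:
  "V \<in> pi_co \<chi> \<tau> n \<Longrightarrow> V' \<in> pi_co \<chi> \<tau> n \<Longrightarrow> j \<in> V \<Longrightarrow> j \<in> V' \<Longrightarrow> V = V'"
  unfolding mem_pi_co using runs_disjoint[OF distinct_chi_order] by metis

lemma pi_co_covers: "j \<in> {1..n} \<Longrightarrow> \<exists>V\<in>pi_co \<chi> \<tau> n. j \<in> V"
proof -
  assume "j \<in> {1..n}"
  then have "j \<in> set (chi_order \<chi> n)" by (simp add: set_chi_order)
  then obtain r where "r \<in> set (runs \<tau> (chi_order \<chi> n))" "j \<in> set r"
    by (meson in_set_runs_iff)
  then show ?thesis by (intro bexI[of _ "set r"]) (auto simp: mem_pi_co)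
qed

lemma pi_co_constant: "V \<in> pi_co \<chi> \<tau> n \<Longrightarrow> i \<in> V \<Longrightarrow> j \<in> V \<Longrightarrow> \<tau> i = \<tau> j"
  unfolding mem_pi_co using runs_constant by metis

definition recolour :: "nat set \<Rightarrow> (nat \<Rightarrow> nat) \<Rightarrow> nat \<Rightarrow> nat" where
  "recolour U \<tau> i = (if i \<in> U then 1 else \<tau> i)"

lemma successively_saturated:
  assumes "\<And>V. V \<in> pi_co \<chi> \<tau> n \<Longrightarrow> V \<subseteq> U \<or> V \<inter> U = {}"
  shows "successively (\<lambda>x y. \<tau> x = \<tau> y \<longrightarrow> (x \<in> U \<longleftrightarrow> y \<in> U)) (chi_order \<chi> n)"
  using successively_runs[of \<tau> "chi_order \<chi> n"]
proof (rule successively_mono)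
  fix x y
  assume "\<tau> x = \<tau> y \<longrightarrow> (\<exists>r\<in>set (runs \<tau> (chi_order \<chi> n)). x \<in> set r \<and> y \<in> set r)"
  then show "\<tau> x = \<tau> y \<longrightarrow> (x \<in> U \<longleftrightarrow> y \<in> U)"
    using assms unfolding mem_pi_co by blast
qed

lemma pi_co_recolour_colour2:
  assumes sat: "\<And>V. V \<in> pi_co \<chi> \<tau> n \<Longrightarrow> V \<subseteq> U \<or> V \<inter> U = {}"
  shows "{V \<in> pi_co \<chi> (recolour U \<tau>) n. \<forall>i\<in>V. recolour U \<tau> i = 2}
    = {V \<in> pi_co \<chi> \<tau> n. \<forall>i\<in>V. \<tau> i = 2 \<and> i \<notin> U}"
proof -
  define L where "L = chi_order \<chi> n"
  define P where "P i \<longleftrightarrow> \<tau> i = 2 \<and> i \<notin> U" for i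
  have P_eq: "P i \<longleftrightarrow> recolour U \<tau> i = 2" for i by (simp add: P_def recolour_def)
  have "successively (\<lambda>x y. \<tau> x = \<tau> y \<longrightarrow> (x \<in> U \<longleftrightarrow> y \<in> U)) L"
    unfolding L_def by (rule successively_saturated) (rule sat)
  then have filt: "filter (\<lambda>r. P (hd r)) (runs (recolour U \<tau>) L) = filter (\<lambda>r. P (hd r)) (runs \<tau> L)"
    by (intro filter_runs_eq, elim successively_mono) (auto simp: P_def recolour_def)
  have run_recoloured: "(\<forall>i\<in>set r. P i) \<longleftrightarrow> P (hd r)" if r: "r \<in> set (runs (recolour U \<tau>) L)" for r
    using runs_constant[OF r] hd_run_in_run[OF r] unfolding P_eq by metis
  have run_original: "(\<forall>i\<in>set r. P i) \<longleftrightarrow> P (hd r)" if r: "r \<in> set (runs \<tau> L)" for r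
  proof -
    have "set r \<subseteq> U \<or> set r \<inter> U = {}" using sat r unfolding mem_pi_co L_def by blast
    then show ?thesis
    proof
      assume "set r \<subseteq> U"
      then show ?thesis using hd_run_in_run[OF r] unfolding P_def by blast
    next
      assume "set r \<inter> U = {}"
      then have "i \<notin> U \<and> \<tau> i = \<tau> (hd r)" if "i \<in> set r" for i
        using that runs_constant[OF r that] by blast
      then show ?thesis using hd_run_in_run[OF r] unfolding P_def by metis
    qed
  qed
  have "{V \<in> pi_co \<chi> (recolour U \<tau>) n. \<forall>i\<in>V. P i} = set ` {r \<in> set (runs (recolour U \<tau>) L). P (hd r)}"
    using run_recoloured unfolding pi_co_def L_def by auto
  also have "\<dots> = set ` {r \<in> set (runs \<tau> L). P (hd r)}"
    using filt by (metis set_filter)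
  also have "\<dots> = {V \<in> pi_co \<chi> \<tau> n. \<forall>i\<in>V. P i}"
    using run_original unfolding pi_co_def L_def by auto
  finally show ?thesis unfolding P_def[abs_def] P_eq[symmetric] by simp
qed

lemma pi_co_recolour_single_block:
  assumes sat: "\<And>V. V \<in> pi_co \<chi> \<tau> n \<Longrightarrow> V \<subseteq> U \<or> V \<inter> U = {}"
    and colours: "\<And>i. i \<in> {1..n} \<Longrightarrow> \<tau> i = 1 \<or> \<tau> i = 2"
    and U2: "\<And>i. i \<in> U \<Longrightarrow> \<tau> i = 2"
    and V: "V \<in> pi_co \<chi> (recolour U \<tau>) n" "V \<subseteq> U"
  shows "pi_co \<chi> (recolour U \<tau>) n = {V}"
proof -
  obtain r where r: "r \<in> set (runs (recolour U \<tau>) (chi_order \<chi> n))" "V = set r"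
    using V(1) by (auto simp: mem_pi_co)
  have "successively (\<lambda>x y. \<tau> x = \<tau> y \<longrightarrow> (x \<in> U \<longleftrightarrow> y \<in> U)) (chi_order \<chi> n)"
    by (rule successively_saturated) (rule sat)
  then have "successively (\<lambda>x y. x \<in> U \<or> y \<in> U \<longrightarrow> recolour U \<tau> x = recolour U \<tau> y) (chi_order \<chi> n)"
  proof (rule successively_mono)
    fix x y
    assume "x \<in> set (chi_order \<chi> n)" "y \<in> set (chi_order \<chi> n)"
    then show "\<tau> x = \<tau> y \<longrightarrow> (x \<in> U \<longleftrightarrow> y \<in> U) \<Longrightarrow> x \<in> U \<or> y \<in> U \<longrightarrow> recolour U \<tau> x = recolour U \<tau> y"
      using colours[of x] colours[of y] U2[of x] U2[of y] by (auto simp: set_chi_order recolour_def)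
  qed
  then have "runs (recolour U \<tau>) (chi_order \<chi> n) = [r]"
    using r V(2) by (intro runs_eq_singleton) auto
  then show ?thesis using r(2) by (simp add: pi_co_def)
qed

section \<open>Functionals on words\<close>

lemma calg_smul_zero: "calg smul \<Longrightarrow> smul c 0 = 0"
  unfolding calg_def by (metis add_cancel_right_right add_0)

lemma wfun_Nil: "wfun K A smul F \<Longrightarrow> F [] = 1"
  by (simp add: wfun_def)

lemma wfun_unit_letter:
  assumes "wfun K A smul F" "valid_word K A u" "valid_word K A v" "k \<in> K" "0 \<in> A k s"
  shows "F (u @ (k, s, (1, 0)) # v) = F (u @ v)"
  using assms unfolding wfun_def by (metis snd_conv)

lemma wfun_scalar_shift:
  assumes "calg smul" "wfun K A smul F" "valid_word K A u" "valid_word K A v"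
    and "k \<in> K" "0 \<in> A k s" "b \<in> A k s"
  shows "F (u @ (k, s, (c + t, b)) # v) = F (u @ (k, s, (c, b)) # v) + t * F (u @ v)"
proof -
  have "uadd (c, b) (t, 0) = (c + t, b)" by (simp add: uadd_def)
  moreover have "usmul smul t (1, 0) = (t, 0)" by (simp add: usmul_def calg_smul_zero[OF assms(1)])
  moreover have "F (u @ (k, s, uadd (c, b) (t, 0)) # v) = F (u @ (k, s, (c, b)) # v) + F (u @ (k, s, (t, 0)) # v)"
    and "F (u @ (k, s, usmul smul t (1, 0)) # v) = t * F (u @ (k, s, (1, 0)) # v)"
    using assms(2-7) unfolding wfun_def by (metis snd_conv)+
  ultimately show ?thesis using wfun_unit_letter[OF assms(2-6)] by simp
qed

definition unit_letter :: "'a::ring letter \<Rightarrow> bool" where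
  "unit_letter l \<longleftrightarrow> snd (snd l) = (1, 0)"

lemma wfun_drop_units:
  assumes "wfun K A smul F" "\<And>k s. k \<in> K \<Longrightarrow> 0 \<in> A k s" "valid_word K A w"
  shows "F w = F (filter (\<lambda>l. \<not> unit_letter l) w)"
proof -
  have "F (u @ w) = F (u @ filter (\<lambda>l. \<not> unit_letter l) w)" if "valid_word K A u" for u
    using assms(3) that
  proof (induction w arbitrary: u)
    case (Cons l w)
    obtain k s c where l: "l = (k, s, c)" by (cases l)
    have w: "valid_word K A w" and k: "k \<in> K" and u: "valid_word K A (u @ [l])"
      using Cons.prems l by (auto simp: valid_word_def valid_letter_def)
    show ?case
    proof (cases "unit_letter l")
      case True
      then have "F (u @ l # w) = F (u @ w)"
        using wfun_unit_letter[OF assms(1) Cons.prems(2) w k assms(2)[OF k]] l by (simp add: unit_letter_def)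
      then show ?thesis using Cons.IH[OF w Cons.prems(2)] True by simp
    next
      case False
      then show ?thesis using Cons.IH[OF w u] by simp
    qed
  qed simp
  from this[of "[]"] show ?thesis by (simp add: valid_word_def)
qed

definition word_of :: "(nat \<Rightarrow> nat) \<Rightarrow> (nat \<Rightarrow> side) \<Rightarrow> (nat \<Rightarrow> complex \<times> 'a) \<Rightarrow> nat list
    \<Rightarrow> 'a letter list" where
  "word_of \<tau> \<chi> x js = map (\<lambda>j. (\<tau> j, \<chi> j, x j)) js"

lemma valid_word_of:
  "(\<And>i. i \<in> set js \<Longrightarrow> \<tau> i \<in> K \<and> snd (x i) \<in> A (\<tau> i) (\<chi> i)) \<Longrightarrow> valid_word K A (word_of \<tau> \<chi> x js)"
  by (auto simp: valid_word_def valid_letter_def word_of_def)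

lemma word_of_cong:
  "(\<And>i. i \<in> set js \<Longrightarrow> \<tau> i = \<tau>' i \<and> x i = x' i) \<Longrightarrow> word_of \<tau> \<chi> x js = word_of \<tau>' \<chi> x' js"
  by (auto simp: word_of_def)

lemma filter_word_of:
  "filter (\<lambda>l. \<not> unit_letter l) (word_of \<tau> \<chi> x js) = word_of \<tau> \<chi> x (filter (\<lambda>i. x i \<noteq> (1, 0)) js)"
  by (simp add: word_of_def unit_letter_def filter_map comp_def)

lemma wfun_word_of_units:
  assumes "wfun K A smul F" "\<And>k s. k \<in> K \<Longrightarrow> 0 \<in> A k s" "valid_word K A (word_of \<tau> \<chi> x js)"
    and "\<And>i. i \<in> set js \<Longrightarrow> x i = (1, 0)"
  shows "F (word_of \<tau> \<chi> x js) = 1"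
proof -
  have "F (word_of \<tau> \<chi> x js) = F (word_of \<tau> \<chi> x (filter (\<lambda>i. x i \<noteq> (1, 0)) js))"
    using wfun_drop_units[OF assms(1-3)] by (simp add: filter_word_of)
  also have "filter (\<lambda>i. x i \<noteq> (1, 0)) js = []" using assms(4) by (simp add: filter_empty_conv)
  finally show ?thesis using wfun_Nil[OF assms(1)] by (simp add: word_of_def)
qed

lemma wfun_word_of_recolour_units:
  assumes "wfun K A smul F" "\<And>k s. k \<in> K \<Longrightarrow> 0 \<in> A k s"
    and "valid_word K A (word_of \<tau> \<chi> x js)" "valid_word K A (word_of \<tau>' \<chi> x js)"
    and "\<And>i. i \<in> set js \<Longrightarrow> \<tau> i = \<tau>' i \<or> x i = (1, 0)"
  shows "F (word_of \<tau> \<chi> x js) = F (word_of \<tau>' \<chi> x js)"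
proof -
  have "word_of \<tau> \<chi> x (filter (\<lambda>i. x i \<noteq> (1, 0)) js) = word_of \<tau>' \<chi> x (filter (\<lambda>i. x i \<noteq> (1, 0)) js)"
    using assms(5) by (intro word_of_cong) auto
  then show ?thesis
    using wfun_drop_units[OF assms(1,2,3)] wfun_drop_units[OF assms(1,2,4)] by (simp add: filter_word_of)
qed

lemma wfun_word_of_scalar_shift:
  assumes "calg smul" "wfun K A smul F" "\<And>k s. k \<in> K \<Longrightarrow> 0 \<in> A k s"
    and "\<And>i. i \<in> set js \<Longrightarrow> \<tau> i \<in> K \<and> snd (x i) \<in> A (\<tau> i) (\<chi> i)"
    and "distinct js" "j \<in> set js"
  shows "F (word_of \<tau> \<chi> (x(j := (fst (x j) + t, snd (x j)))) js)
    = F (word_of \<tau> \<chi> x js) + t * F (word_of \<tau> \<chi> (x(j := (1, 0))) js)"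
proof -
  obtain ys zs where js: "js = ys @ j # zs" using split_list[OF assms(6)] by blast
  then have "j \<notin> set ys" "j \<notin> set zs" using assms(5) by auto
  then have split: "word_of \<tau> \<chi> (x(j := y)) js = word_of \<tau> \<chi> x ys @ (\<tau> j, \<chi> j, y) # word_of \<tau> \<chi> x zs"
    for y
    using js by (auto simp: word_of_def)
  have unsplit: "word_of \<tau> \<chi> x js = word_of \<tau> \<chi> x ys @ (\<tau> j, \<chi> j, (fst (x j), snd (x j))) # word_of \<tau> \<chi> x zs"
    using split[of "x j"] by simp
  have ys: "valid_word K A (word_of \<tau> \<chi> x ys)" and zs: "valid_word K A (word_of \<tau> \<chi> x zs)"
    using assms(4) js by (auto intro!: valid_word_of)
  have j: "\<tau> j \<in> K" "snd (x j) \<in> A (\<tau> j) (\<chi> j)" using assms(4,6) by auto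
  show ?thesis
    unfolding split unsplit
    using wfun_scalar_shift[OF assms(1,2) ys zs j(1) assms(3)[OF j(1)] j(2)]
      wfun_unit_letter[OF assms(2) ys zs j(1) assms(3)[OF j(1)]] by simp
qed

lemma word_of_fun_upd_notin: "j \<notin> set js \<Longrightarrow> word_of \<tau> \<chi> (x(j := y)) js = word_of \<tau> \<chi> x js"
  by (auto simp: word_of_def)

definition shift_scalars :: "(nat \<Rightarrow> complex \<times> 'a) \<Rightarrow> (nat \<Rightarrow> complex) \<Rightarrow> nat \<Rightarrow> complex \<times> 'a" where
  "shift_scalars x t i = (fst (x i) + t i, snd (x i))"

text \<open>The value is affine in each shift \<open>t j\<close>, with slope the value at \<open>x(j := (1, 0))\<close>;
  by induction on \<open>P\<close> the slope can be made non-zero, so the value can be moved to \<open>0\<close>.\<close>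

lemma scalar_shifts_nonzero_and_zero:
  assumes "calg smul" "wfun K A smul F" "\<And>k s. k \<in> K \<Longrightarrow> 0 \<in> A k s" "distinct js"
    and "finite P" "P \<subseteq> set js"
    and "\<And>i. i \<in> set js \<Longrightarrow> \<tau> i \<in> K \<and> snd (x i) \<in> A (\<tau> i) (\<chi> i)"
    and "\<And>i. i \<in> set js \<Longrightarrow> i \<notin> P \<Longrightarrow> x i = (1, 0)"
  shows "(\<exists>t. (\<forall>i. i \<notin> P \<longrightarrow> t i = 0) \<and> F (word_of \<tau> \<chi> (shift_scalars x t) js) \<noteq> 0)
    \<and> (P \<noteq> {} \<longrightarrow> (\<exists>t. (\<forall>i. i \<notin> P \<longrightarrow> t i = 0) \<and> F (word_of \<tau> \<chi> (shift_scalars x t) js) = 0))"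
  using assms(5-8)
proof (induction P arbitrary: x rule: finite_induct)
  case empty
  have "valid_word K A (word_of \<tau> \<chi> x js)" using empty.prems(2) by (rule valid_word_of)
  then have "F (word_of \<tau> \<chi> x js) = 1"
    using empty.prems(3) by (intro wfun_word_of_units[OF assms(2,3)]) auto
  moreover have "shift_scalars x (\<lambda>_. 0) = x" by (simp add: shift_scalars_def fun_eq_iff)
  ultimately show ?case by (intro conjI) (auto intro!: exI[of _ "\<lambda>_. 0"])
next
  case (insert j P)
  define x1 where "x1 = x(j := (1, 0))"
  have "P \<subseteq> set js" using insert.prems(1) by simp
  moreover have "\<tau> i \<in> K \<and> snd (x1 i) \<in> A (\<tau> i) (\<chi> i)" if "i \<in> set js" for i
    using insert.prems(2)[OF that] assms(3) by (auto simp: x1_def)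
  moreover have "x1 i = (1, 0)" if "i \<in> set js" "i \<notin> P" for i
    using insert.prems(3)[OF that(1)] that(2) by (simp add: x1_def)
  ultimately obtain t where t: "\<forall>i. i \<notin> P \<longrightarrow> t i = 0" "F (word_of \<tau> \<chi> (shift_scalars x1 t) js) \<noteq> 0"
    using insert.IH[of x1] by blast
  define c where "c = F (word_of \<tau> \<chi> (shift_scalars x1 t) js)"
  define c0 where "c0 = F (word_of \<tau> \<chi> (shift_scalars x t) js)"
  have tj: "t j = 0" using t(1) insert.hyps(2) by simp
  have affine: "F (word_of \<tau> \<chi> (shift_scalars x (t(j := s))) js) = c0 + s * c" for s
  proof -
    have "shift_scalars x (t(j := s))
        = (shift_scalars x t)(j := (fst (shift_scalars x t j) + s, snd (shift_scalars x t j)))"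
      and "(shift_scalars x t)(j := (1, 0)) = shift_scalars x1 t"
      using tj by (auto simp: shift_scalars_def x1_def)
    then show ?thesis
      using wfun_word_of_scalar_shift[OF assms(1-3) _ assms(4), of \<tau> "shift_scalars x t" \<chi> j s]
        insert.prems(1,2) unfolding c0_def c_def by (simp add: shift_scalars_def)
  qed
  have "c \<noteq> 0" using t(2) c_def by simp
  then have "F (word_of \<tau> \<chi> (shift_scalars x (t(j := (1 - c0) / c))) js) \<noteq> 0"
    and "F (word_of \<tau> \<chi> (shift_scalars x (t(j := - c0 / c))) js) = 0"
    using affine by simp_all
  moreover have "\<forall>i. i \<notin> insert j P \<longrightarrow> (t(j := s)) i = 0" for s using t(1) by simp
  ultimately show ?case by blast
qed

lemma sorted_list_of_set_atLeastAtMost: "sorted_list_of_set {1..n} = [1..<Suc n]"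
proof -
  have "{1..n} = {1..<Suc n}" by auto
  then show ?thesis by simp
qed

lemma sorted_list_of_set_filter:
  "finite A \<Longrightarrow> sorted_list_of_set {x \<in> A. P x} = filter P (sorted_list_of_set A)"
  by (rule sorted_distinct_set_unique) (auto intro: sorted_wrt_filter)

lemma c_bifree_word_of:
  assumes "c_bifree K A smul \<Phi> \<Psi> phis psis" "n \<ge> 1"
    and "valid_word K A (word_of \<tau> \<chi> x (sorted_list_of_set {1..n}))"
    and "\<And>V. V \<in> pi_co \<chi> \<tau> n \<Longrightarrow> \<Psi> (word_of \<tau> \<chi> x (sorted_list_of_set V)) = 0"
  shows "\<Phi> (word_of \<tau> \<chi> x (sorted_list_of_set {1..n}))
    = (\<Prod>V\<in>pi_co \<chi> \<tau> n. \<Phi> (word_of \<tau> \<chi> x (sorted_list_of_set V)))"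
proof -
  define w where "w = word_of \<tau> \<chi> x [1..<Suc n]"
  have nth: "w ! (i - 1) = (\<tau> i, \<chi> i, x i)" if "1 \<le> i" "i \<le> n" for i
    using that by (auto simp: w_def word_of_def nth_map nth_upt simp del: upt_Suc)
  have "pi_co (chi_of w) (omega_of w) n = pi_co \<chi> \<tau> n"
    by (intro pi_co_cong) (auto simp: chi_of_def omega_of_def nth[simplified])
  moreover have "length w = n" by (simp add: w_def word_of_def)
  ultimately have blocks: "pi_co (chi_of w) (omega_of w) (length w) = pi_co \<chi> \<tau> n" by simp
  have subword: "subword w V = word_of \<tau> \<chi> x (sorted_list_of_set V)" if "V \<in> pi_co \<chi> \<tau> n" for V
    using pi_co_subset[OF that] finite_subset[OF pi_co_subset[OF that]]
    by (auto simp: subword_def word_of_def nth[simplified] subset_iff intro!: map_cong)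
  have "w \<noteq> []" using assms(2) by (simp add: w_def word_of_def)
  then show ?thesis
    using assms(1,3,4) blocks subword unfolding sorted_list_of_set_atLeastAtMost w_def[symmetric] c_bifree_def
    by (simp cong: prod.cong)
qed

section \<open>The defect of a configuration\<close>

locale bimonotone_setting =
  fixes smul :: "complex \<Rightarrow> 'a::ring \<Rightarrow> 'a" and \<phi> :: "'a \<Rightarrow> complex"
    and A :: "nat \<Rightarrow> side \<Rightarrow> 'a set"
    and n :: nat and \<chi> :: "nat \<Rightarrow> side" and \<omega> :: "nat \<Rightarrow> nat" and a :: "nat \<Rightarrow> 'a"
    and \<Phi> \<Psi> \<Phi>1 \<Delta>1 \<Phi>2 :: "'a letter list \<Rightarrow> complex"
  assumes calg: "calg smul"
    and zero_in_A: "\<And>k s. k \<in> {1, 2} \<Longrightarrow> 0 \<in> A k s"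
    and n_pos: "n \<ge> 1"
    and colours: "\<And>j. j \<in> {1..n} \<Longrightarrow> \<omega> j = 1 \<or> \<omega> j = 2"
    and letters: "\<And>j. j \<in> {1..n} \<Longrightarrow> a j \<in> A (\<omega> j) (\<chi> j)"
    and Delta1_vanishes: "\<And>w. w \<noteq> [] \<Longrightarrow> valid_word {1} A w \<Longrightarrow> nonunit_word w \<Longrightarrow> \<Delta>1 w = 0"
    and c_bifree: "c_bifree {1, 2} A smul \<Phi> \<Psi>
      (\<lambda>k. if k = 1 then \<Phi>1 else \<Phi>2) (\<lambda>k. if k = 1 then \<Delta>1 else \<Phi>2)"
    and Phi_extends_phi:
      "\<And>w. w \<noteq> [] \<Longrightarrow> valid_word {1, 2} A w \<Longrightarrow> nonunit_word w \<Longrightarrow> \<Phi> w = phi_word \<phi> w"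
begin

text \<open>Configurations \<open>x\<close> assign to each position \<open>j\<close> an element \<open>fst (x j) 1 + snd (x j)\<close> of the
  unitization; at colour-1 positions it is always \<open>a j\<close>.\<close>

definition admissible :: "(nat \<Rightarrow> complex \<times> 'a) \<Rightarrow> bool" where
  "admissible x \<longleftrightarrow>
    (\<forall>j\<in>{1..n}. (\<omega> j = 1 \<longrightarrow> x j = (0, a j)) \<and> (\<omega> j = 2 \<longrightarrow> snd (x j) \<in> A 2 (\<chi> j)))"

definition block_word :: "(nat \<Rightarrow> complex \<times> 'a) \<Rightarrow> nat set \<Rightarrow> 'a letter list" where
  "block_word x V = word_of \<omega> \<chi> x (sorted_list_of_set V)"

definition W :: "nat set" where
  "W = {j \<in> {1..n}. \<omega> j = 1}"

definition blocks2 :: "nat set set" where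
  "blocks2 = {V \<in> pi_co \<chi> \<omega> n. \<forall>j\<in>V. \<omega> j = 2}"

definition defect :: "(nat \<Rightarrow> complex \<times> 'a) \<Rightarrow> complex" where
  "defect x = \<Phi> (block_word x {1..n}) - \<Phi> (block_word x W) * (\<Prod>V\<in>blocks2. \<Phi> (block_word x V))"

definition active :: "(nat \<Rightarrow> complex \<times> 'a) \<Rightarrow> nat set" where
  "active x = {j \<in> {1..n}. \<omega> j = 2 \<and> x j \<noteq> (1, 0)}"

lemma wfun_Phi: "wfun {1, 2} A smul \<Phi>" and wfun_Psi: "wfun {1, 2} A smul \<Psi>"
  using c_bifree by (simp_all add: c_bifree_def)

lemma Psi_eq_Delta1: "valid_word {1} A w \<Longrightarrow> \<Psi> w = \<Delta>1 w"
  using c_bifree unfolding c_bifree_def by auto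

lemma Psi_eq_Phi: "valid_word {2} A w \<Longrightarrow> \<Psi> w = \<Phi> w"
  using c_bifree unfolding c_bifree_def by auto

lemma admissible_letter:
  "admissible x \<Longrightarrow> i \<in> {1..n} \<Longrightarrow> \<omega> i \<in> {1, 2} \<and> snd (x i) \<in> A (\<omega> i) (\<chi> i)"
  using colours[of i] letters[of i] by (auto simp: admissible_def)

lemma valid_block_word:
  assumes "admissible x" "V \<subseteq> {1..n}"
  shows "valid_word {1, 2} A (block_word x V)"
proof -
  have "finite V" using assms(2) finite_subset by blast
  then have "i \<in> {1..n}" if "i \<in> set (sorted_list_of_set V)" for i using that assms(2) by auto
  then show ?thesis
    unfolding block_word_def by (intro valid_word_of) (use admissible_letter[OF assms(1)] in blast)
qed

lemma blocks2_subset: "V \<in> blocks2 \<Longrightarrow> V \<subseteq> {1..n}"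
  unfolding blocks2_def using pi_co_subset by blast

lemma finite_blocks2: "finite blocks2"
  using finite_pi_co[of \<chi> \<omega> n] by (simp add: blocks2_def)

lemma block_word_fun_upd_notin: "j \<notin> V \<Longrightarrow> finite V \<Longrightarrow> block_word (x(j := y)) V = block_word x V"
  by (simp add: block_word_def word_of_fun_upd_notin)

lemma Phi_block_word_scalar_shift:
  assumes "admissible x" "V \<subseteq> {1..n}" "j \<in> V"
  shows "\<Phi> (block_word (x(j := (fst (x j) + s, snd (x j)))) V)
    = \<Phi> (block_word x V) + s * \<Phi> (block_word (x(j := (1, 0))) V)"
proof -
  have "finite V" using assms(2) finite_subset by blast
  then have "i \<in> {1..n}" if "i \<in> set (sorted_list_of_set V)" for i using that assms(2) by auto
  then show ?thesis
    unfolding block_word_def using \<open>finite V\<close> assms(3) admissible_letter[OF assms(1)]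
    by (intro wfun_word_of_scalar_shift[OF calg wfun_Phi zero_in_A]) auto
qed

lemma defect_scalar_shift:
  assumes x: "admissible x" and j: "j \<in> {1..n}" "\<omega> j = 2"
  shows "defect (x(j := (fst (x j) + s, snd (x j)))) = defect x + s * defect (x(j := (1, 0)))"
proof -
  define x' where "x' = x(j := (fst (x j) + s, snd (x j)))"
  define x1 where "x1 = x(j := (1, 0))"
  obtain Vj where Vj: "Vj \<in> pi_co \<chi> \<omega> n" "j \<in> Vj" using pi_co_covers[OF j(1)] by blast
  then have Vj2: "Vj \<in> blocks2" using pi_co_constant[OF Vj(1) _ Vj(2)] j(2) by (auto simp: blocks2_def)
  have W: "block_word x' W = block_word x W" "block_word x1 W = block_word x W"
    using j(2) by (simp_all add: x'_def x1_def W_def block_word_fun_upd_notin)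
  have others: "block_word x' V = block_word x V \<and> block_word x1 V = block_word x V"
    if "V \<in> blocks2 - {Vj}" for V
  proof -
    have "j \<notin> V" using that Vj pi_co_disjoint unfolding blocks2_def by blast
    moreover have "finite V" using that blocks2_subset finite_subset by blast
    ultimately show ?thesis by (simp add: x'_def x1_def block_word_fun_upd_notin)
  qed
  define P where "P = (\<Prod>V\<in>blocks2 - {Vj}. \<Phi> (block_word x V))"
  have prod_split: "(\<Prod>V\<in>blocks2. \<Phi> (block_word y V)) = \<Phi> (block_word y Vj) * P"
    if "\<And>V. V \<in> blocks2 - {Vj} \<Longrightarrow> block_word y V = block_word x V" for y
  proof -
    have "(\<Prod>V\<in>blocks2 - {Vj}. \<Phi> (block_word y V)) = P"
      unfolding P_def using that by (intro prod.cong) auto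
    then show ?thesis using prod.remove[OF finite_blocks2 Vj2, of "\<lambda>V. \<Phi> (block_word y V)"] by simp
  qed
  have Vj_shift: "\<Phi> (block_word x' Vj) = \<Phi> (block_word x Vj) + s * \<Phi> (block_word x1 Vj)"
    unfolding x'_def x1_def by (rule Phi_block_word_scalar_shift[OF x blocks2_subset[OF Vj2] Vj(2)])
  have whole_shift: "\<Phi> (block_word x' {1..n}) = \<Phi> (block_word x {1..n}) + s * \<Phi> (block_word x1 {1..n})"
    unfolding x'_def x1_def by (rule Phi_block_word_scalar_shift[OF x _ j(1)]) simp
  have "defect x'
      = \<Phi> (block_word x {1..n}) + s * \<Phi> (block_word x1 {1..n})
        - \<Phi> (block_word x W) * ((\<Phi> (block_word x Vj) + s * \<Phi> (block_word x1 Vj)) * P)"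
    using prod_split[of x', OF others[THEN conjunct1]] Vj_shift whole_shift by (simp add: defect_def W)
  also have "\<dots> = defect x + s * defect x1"
    using prod_split[of x1, OF others[THEN conjunct2]] prod_split[of x]
    by (simp add: defect_def W algebra_simps)
  finally show ?thesis unfolding x'_def x1_def .
qed

lemma admissible_shift_scalars:
  assumes "admissible x" "\<And>i. i \<notin> active x \<Longrightarrow> t i = 0"
  shows "admissible (shift_scalars x t)"
proof -
  have "t i = 0" if "i \<in> {1..n}" "\<omega> i = 1" for i
    using that assms(2)[of i] by (simp add: active_def)
  then show ?thesis using assms(1) by (simp add: admissible_def shift_scalars_def)
qed

lemma admissible_fun_upd_unit: "admissible y \<Longrightarrow> \<omega> j = 2 \<Longrightarrow> admissible (y(j := (1, 0)))"
  using zero_in_A[of 2] by (auto simp: admissible_def)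

lemma card_active_shift_unit:
  assumes j: "j \<in> active x" and t: "\<And>i. i \<notin> active x \<Longrightarrow> t i = 0"
  shows "card (active ((shift_scalars x t)(j := (1, 0)))) < card (active x)"
proof -
  have "active ((shift_scalars x t)(j := (1, 0))) \<subseteq> active x - {j}"
  proof
    fix i assume i: "i \<in> active ((shift_scalars x t)(j := (1, 0)))"
    then have "i \<noteq> j" by (auto simp: active_def)
    moreover have "i \<in> active x"
    proof (rule ccontr)
      assume "i \<notin> active x"
      with i t[of i] show False by (auto simp: active_def shift_scalars_def split: if_splits)
    qed
    ultimately show "i \<in> active x - {j}" by simp
  qed
  moreover have "finite (active x)" by (simp add: active_def)
  ultimately show ?thesis
    using card_mono card_Diff1_less[OF _ j] by (metis finite_Diff order_le_less_trans)
qed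

text \<open>Shifting the scalar at an active position \<open>j\<close> changes the defect by a multiple of the
  defect of \<open>y(j := (1, 0))\<close>, which has fewer active positions.\<close>

lemma defect_shift_invariant:
  assumes x: "admissible x"
    and smaller: "\<And>y. admissible y \<Longrightarrow> card (active y) < card (active x) \<Longrightarrow> defect y = 0"
    and t: "\<And>i. i \<notin> active x \<Longrightarrow> t i = 0"
  shows "defect (shift_scalars x t) = defect x"
proof -
  have "finite F \<Longrightarrow> F \<subseteq> active x \<Longrightarrow> \<forall>i. i \<notin> F \<longrightarrow> t i = 0
      \<Longrightarrow> defect (shift_scalars x t) = defect x" for F t
  proof (induction F arbitrary: t rule: finite_induct)
    case empty
    have "shift_scalars x t = x" using empty.prems(2) by (auto simp: shift_scalars_def fun_eq_iff)
    then show ?case by simp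
  next
    case (insert j F)
    define y where "y = shift_scalars x (t(j := 0))"
    have j: "j \<in> active x" "j \<in> {1..n}" "\<omega> j = 2" using insert.prems(1) by (auto simp: active_def)
    have y_defect: "defect y = defect x"
      unfolding y_def using insert.IH insert.prems by simp
    have y: "admissible y"
      unfolding y_def using insert.prems by (intro admissible_shift_scalars[OF x]) auto
    have "card (active (y(j := (1, 0)))) < card (active x)"
      unfolding y_def using j(1) insert.prems by (intro card_active_shift_unit) auto
    then have "defect (y(j := (1, 0))) = 0"
      using smaller admissible_fun_upd_unit[OF y j(3)] by blast
    moreover have "shift_scalars x t = y(j := (fst (y j) + t j, snd (y j)))"
      by (auto simp: y_def shift_scalars_def)
    then have "defect (shift_scalars x t) = defect y + t j * defect (y(j := (1, 0)))"
      by (simp only: defect_scalar_shift[OF y j(2,3)])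
    ultimately show ?case using y_defect by simp
  qed
  moreover have "finite (active x)" by (simp add: active_def)
  ultimately show ?thesis using t by blast
qed

lemma Phi_block_word_units:
  assumes "admissible y" "V \<subseteq> {1..n}" "\<forall>i\<in>V. y i = (1, 0)"
  shows "\<Phi> (block_word y V) = 1"
  using valid_block_word[OF assms(1,2)] assms(2,3) finite_subset[OF assms(2)]
  unfolding block_word_def by (intro wfun_word_of_units[OF wfun_Phi zero_in_A]) auto

lemma defect_without_active:
  assumes x: "admissible x" and no_active: "active x = {}"
  shows "defect x = 0"
proof -
  have unit: "x i = (1, 0)" if "i \<in> {1..n}" "\<omega> i = 2" for i
    using no_active that by (auto simp: active_def)
  have drop_units: "\<Phi> (block_word x V) = \<Phi> (word_of \<omega> \<chi> x (filter (\<lambda>i. x i \<noteq> (1, 0)) (sorted_list_of_set V)))"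
    if "V \<subseteq> {1..n}" for V
    using wfun_drop_units[OF wfun_Phi zero_in_A valid_block_word[OF x that]]
    by (simp add: block_word_def filter_word_of)
  have "filter (\<lambda>i. x i \<noteq> (1, 0)) (sorted_list_of_set {1..n}) = filter (\<lambda>i. \<omega> i = 1) (sorted_list_of_set {1..n})"
  proof (rule filter_cong)
    fix i assume "i \<in> set (sorted_list_of_set {1..n})"
    then have "i \<in> {1..n}" by simp
    then show "x i \<noteq> (1, 0) \<longleftrightarrow> \<omega> i = 1"
      using colours[of i] unit[of i] x by (auto simp: admissible_def)
  qed simp
  also have "\<dots> = sorted_list_of_set W"
    unfolding W_def by (rule sorted_list_of_set_filter[symmetric]) simp
  finally have whole: "\<Phi> (block_word x {1..n}) = \<Phi> (block_word x W)"
    using drop_units[of "{1..n}"] by (simp add: block_word_def)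
  have "\<Phi> (block_word x V) = 1" if V: "V \<in> blocks2" for V
    using V blocks2_subset[OF V] unit by (intro Phi_block_word_units[OF x]) (auto simp: blocks2_def)
  then show ?thesis unfolding defect_def whole by simp
qed

lemma exists_annihilating_block_shift:
  assumes x: "admissible x" and V: "V \<in> blocks2" "V \<inter> active x \<noteq> {}"
  shows "\<exists>t. (\<forall>i. i \<notin> V \<inter> active x \<longrightarrow> t i = 0) \<and> \<Phi> (block_word (shift_scalars x t) V) = 0"
proof -
  have fin: "finite V" using blocks2_subset[OF V(1)] finite_subset by blast
  have "i \<in> {1..n}" if "i \<in> set (sorted_list_of_set V)" for i
    using that fin blocks2_subset[OF V(1)] by auto
  then have "\<omega> i \<in> {1, 2} \<and> snd (x i) \<in> A (\<omega> i) (\<chi> i)" if "i \<in> set (sorted_list_of_set V)" for i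
    using admissible_letter[OF x] that by blast
  moreover have "x i = (1, 0)" if "i \<in> set (sorted_list_of_set V)" "i \<notin> V \<inter> active x" for i
    using that fin blocks2_subset[OF V(1)] V(1) by (auto simp: active_def blocks2_def)
  ultimately show ?thesis
    using scalar_shifts_nonzero_and_zero[OF calg wfun_Phi zero_in_A, of "sorted_list_of_set V" "V \<inter> active x"]
      fin V(2) unfolding block_word_def by auto
qed

lemma exists_annihilating_shift:
  assumes x: "admissible x"
  shows "\<exists>t. (\<forall>i. i \<notin> active x \<longrightarrow> t i = 0)
    \<and> (\<forall>V\<in>blocks2. V \<inter> active x \<noteq> {} \<longrightarrow> \<Phi> (block_word (shift_scalars x t) V) = 0)"
proof -
  define B where "B = {V \<in> blocks2. V \<inter> active x \<noteq> {}}"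
  have "\<forall>V\<in>B. \<exists>t. (\<forall>i. i \<notin> V \<inter> active x \<longrightarrow> t i = 0) \<and> \<Phi> (block_word (shift_scalars x t) V) = 0"
    using exists_annihilating_block_shift[OF x] unfolding B_def by blast
  then obtain tV where tV: "\<And>V. V \<in> B \<Longrightarrow> (\<forall>i. i \<notin> V \<inter> active x \<longrightarrow> tV V i = 0)
      \<and> \<Phi> (block_word (shift_scalars x (tV V)) V) = 0"
    by (auto dest!: bchoice)
  define t where "t i = (\<Sum>V\<in>B. tV V i)" for i
  have "finite B" using finite_blocks2 by (simp add: B_def)
  have t_block: "t i = tV V i" if V: "V \<in> B" "i \<in> V" for V i
  proof -
    have "tV V' i = 0" if "V' \<in> B - {V}" for V'
    proof -
      have "i \<notin> V'" using that V pi_co_disjoint unfolding B_def blocks2_def by blast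
      then show ?thesis using tV that by blast
    qed
    then have "(\<Sum>V'\<in>B - {V}. tV V' i) = 0" by (intro sum.neutral) blast
    then show ?thesis unfolding t_def using sum.remove[OF \<open>finite B\<close> V(1), of "\<lambda>V. tV V i"] by simp
  qed
  have "t i = 0" if "i \<notin> active x" for i
    unfolding t_def using tV that by (intro sum.neutral) blast
  moreover have "block_word (shift_scalars x t) V = block_word (shift_scalars x (tV V)) V" if "V \<in> B" for V
  proof -
    have "finite V" using that blocks2_subset finite_subset unfolding B_def by blast
    then show ?thesis
      unfolding block_word_def using t_block[OF that] by (intro word_of_cong) (simp add: shift_scalars_def)
  qed
  ultimately show ?thesis using tV unfolding B_def by (intro exI[of _ t]) auto
qed

lemma Psi_colour1_word:
  assumes "valid_word {1} A w" "\<forall>l\<in>set w. unit_letter l \<or> fst (snd (snd l)) = 0"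
    and "\<exists>l\<in>set w. \<not> unit_letter l"
  shows "\<Psi> w = 0"
proof -
  define w' where "w' = filter (\<lambda>l. \<not> unit_letter l) w"
  have "valid_word {1, 2} A w" using assms(1) by (auto simp: valid_word_def valid_letter_def)
  then have "\<Psi> w = \<Psi> w'" using wfun_drop_units[OF wfun_Psi zero_in_A] by (simp add: w'_def)
  moreover have "valid_word {1} A w'" using assms(1) by (auto simp: w'_def valid_word_def)
  moreover have "w' \<noteq> []" "nonunit_word w'"
    using assms(2,3) by (auto simp: w'_def nonunit_word_def filter_empty_conv)
  ultimately show ?thesis using Psi_eq_Delta1 Delta1_vanishes by simp
qed

definition unit_blocks :: "(nat \<Rightarrow> complex \<times> 'a) \<Rightarrow> nat set" where
  "unit_blocks y = \<Union>{V \<in> blocks2. \<forall>i\<in>V. y i = (1, 0)}"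

lemma mem_unit_blocks: "i \<in> unit_blocks y \<Longrightarrow> i \<in> {1..n} \<and> \<omega> i = 2 \<and> y i = (1, 0)"
  using blocks2_subset by (fastforce simp: unit_blocks_def blocks2_def)

lemma unit_blocks_saturated:
  "V \<in> pi_co \<chi> \<omega> n \<Longrightarrow> V \<subseteq> unit_blocks y \<or> V \<inter> unit_blocks y = {}"
  unfolding unit_blocks_def blocks2_def using pi_co_disjoint by blast

lemma recoloured_colour2_blocks:
  "{V \<in> pi_co \<chi> (recolour (unit_blocks y) \<omega>) n. \<forall>i\<in>V. recolour (unit_blocks y) \<omega> i = 2}
    = {V \<in> blocks2. V \<inter> unit_blocks y = {}}"
proof -
  have "\<And>V. V \<in> pi_co \<chi> \<omega> n \<Longrightarrow> V \<subseteq> unit_blocks y \<or> V \<inter> unit_blocks y = {}"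
    by (rule unit_blocks_saturated)
  then have "{V \<in> pi_co \<chi> (recolour (unit_blocks y) \<omega>) n. \<forall>i\<in>V. recolour (unit_blocks y) \<omega> i = 2}
      = {V \<in> pi_co \<chi> \<omega> n. \<forall>i\<in>V. \<omega> i = 2 \<and> i \<notin> unit_blocks y}"
    by (rule pi_co_recolour_colour2)
  then show ?thesis unfolding blocks2_def by blast
qed

abbreviation recoloured :: "(nat \<Rightarrow> complex \<times> 'a) \<Rightarrow> nat \<Rightarrow> nat" where
  "recoloured y \<equiv> recolour (unit_blocks y) \<omega>"

lemma recoloured_colours:
  "i \<in> {1..n} \<Longrightarrow> recoloured y i = 1 \<and> (i \<notin> unit_blocks y \<longrightarrow> \<omega> i = 1)
    \<or> recoloured y i = 2 \<and> i \<notin> unit_blocks y \<and> \<omega> i = 2"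
  using colours[of i] by (auto simp: recolour_def)

lemma recoloured_block_colour:
  assumes V: "V \<in> pi_co \<chi> (recoloured y) n"
  shows "(\<forall>i\<in>V. recoloured y i = 1) \<or> (\<forall>i\<in>V. recoloured y i = 2)"
proof -
  obtain p where p: "p \<in> V" using pi_co_nonempty[OF V] by blast
  then have "recoloured y p = 1 \<or> recoloured y p = 2"
    using recoloured_colours[of p y] pi_co_subset[OF V] by auto
  then show ?thesis using pi_co_constant[OF V _ p] by metis
qed

lemma Psi_recoloured_colour2_block:
  assumes y: "admissible y"
    and vanish: "\<And>V. V \<in> blocks2 \<Longrightarrow> V \<inter> unit_blocks y = {} \<Longrightarrow> \<Phi> (block_word y V) = 0"
    and V: "V \<in> pi_co \<chi> (recoloured y) n" "\<forall>i\<in>V. recoloured y i = 2"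
  shows "\<Psi> (word_of (recoloured y) \<chi> y (sorted_list_of_set V)) = 0"
proof -
  have V2: "V \<in> blocks2" "V \<inter> unit_blocks y = {}"
    using recoloured_colour2_blocks[of y] V by auto
  have V_list: "set (sorted_list_of_set V) = V"
    using finite_subset[OF blocks2_subset[OF V2(1)]] by simp
  have "word_of (recoloured y) \<chi> y (sorted_list_of_set V) = block_word y V"
    unfolding block_word_def using V2(2) by (intro word_of_cong) (auto simp: V_list recolour_def)
  moreover have "\<omega> i = 2 \<and> snd (y i) \<in> A 2 (\<chi> i)" if "i \<in> V" for i
    using admissible_letter[OF y subsetD[OF blocks2_subset[OF V2(1)] that]] V2(1) that
    by (auto simp: blocks2_def)
  then have "valid_word {2} A (block_word y V)"
    unfolding block_word_def by (intro valid_word_of) (auto simp: V_list)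
  ultimately show ?thesis using Psi_eq_Phi vanish[OF V2] by simp
qed

text \<open>A colour-1 block of the recoloured partition made of units only would be the whole
  partition, which also contains the colour-2 block \<open>V0\<close>.\<close>

lemma Psi_recoloured_colour1_block:
  assumes y: "admissible y" and V0: "V0 \<in> blocks2" "V0 \<inter> unit_blocks y = {}"
    and V: "V \<in> pi_co \<chi> (recoloured y) n" "\<forall>i\<in>V. recoloured y i = 1"
  shows "\<Psi> (word_of (recoloured y) \<chi> y (sorted_list_of_set V)) = 0"
proof -
  define U where "U = unit_blocks y"
  have V_sub: "V \<subseteq> {1..n}" using pi_co_subset[OF V(1)] .
  then have V_list: "set (sorted_list_of_set V) = V" using finite_subset by (metis finite_atLeastAtMost set_sorted_list_of_set)
  have "\<not> V \<subseteq> U"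
  proof
    assume "V \<subseteq> U"
    have "\<And>V. V \<in> pi_co \<chi> \<omega> n \<Longrightarrow> V \<subseteq> U \<or> V \<inter> U = {}"
      unfolding U_def by (rule unit_blocks_saturated)
    then have "pi_co \<chi> (recoloured y) n = {V}"
      unfolding U_def using colours mem_unit_blocks V(1) \<open>V \<subseteq> U\<close>
      by (intro pi_co_recolour_single_block) (auto simp: U_def)
    moreover have "V0 \<in> pi_co \<chi> (recoloured y) n" "\<forall>i\<in>V0. recoloured y i = 2"
      using recoloured_colour2_blocks[of y] V0 by auto
    ultimately have "\<forall>i\<in>V. recoloured y i = 2" by auto
    moreover obtain i where "i \<in> V" using pi_co_nonempty[OF V(1)] by blast
    ultimately show False using V(2) by auto
  qed
  then obtain q where q: "q \<in> V" "q \<notin> U" by blast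
  have letter: "i \<in> U \<and> y i = (1, 0) \<or> i \<notin> U \<and> \<omega> i = 1 \<and> y i = (0, a i)" if "i \<in> V" for i
    using V(2) that recoloured_colours[OF subsetD[OF V_sub that], of y] mem_unit_blocks[of i y]
      y subsetD[OF V_sub that]
    by (auto simp: U_def admissible_def)
  have "recoloured y i = 1 \<and> snd (y i) \<in> A 1 (\<chi> i)" and "y i = (1, 0) \<or> fst (y i) = 0"
    if "i \<in> V" for i
    using V(2) that letter[OF that] letters[OF subsetD[OF V_sub that]] zero_in_A[of 1 "\<chi> i"] by auto
  moreover have "y q \<noteq> (1, 0)" using letter[OF q(1)] q(2) by auto
  ultimately show ?thesis
    using q(1) by (intro Psi_colour1_word valid_word_of) (auto simp: V_list word_of_def unit_letter_def)
qed

lemma valid_recoloured_word: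
  assumes y: "admissible y"
  shows "valid_word {1, 2} A (word_of (recoloured y) \<chi> y (sorted_list_of_set {1..n}))"
proof -
  have "recoloured y i \<in> {1, 2} \<and> snd (y i) \<in> A (recoloured y i) (\<chi> i)" if "i \<in> {1..n}" for i
  proof (cases "i \<in> unit_blocks y")
    case True
    then show ?thesis using mem_unit_blocks[of i y] zero_in_A[of 1] by (simp add: recolour_def)
  next
    case False
    then show ?thesis using admissible_letter[OF y that] by (simp add: recolour_def)
  qed
  then show ?thesis by (intro valid_word_of) simp
qed

lemma Phi_recoloured_word:
  assumes y: "admissible y"
  shows "\<Phi> (block_word y {1..n}) = \<Phi> (word_of (recoloured y) \<chi> y (sorted_list_of_set {1..n}))"
  unfolding block_word_def using valid_block_word[OF y, of "{1..n}"] valid_recoloured_word[OF y]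
    mem_unit_blocks[of _ y]
  by (intro wfun_word_of_recolour_units[OF wfun_Phi zero_in_A]) (auto simp: block_word_def recolour_def)

lemma Psi_recoloured_block:
  assumes y: "admissible y" and V0: "V0 \<in> blocks2" "V0 \<inter> unit_blocks y = {}"
    and vanish: "\<And>V. V \<in> blocks2 \<Longrightarrow> V \<inter> unit_blocks y = {} \<Longrightarrow> \<Phi> (block_word y V) = 0"
    and V: "V \<in> pi_co \<chi> (recoloured y) n"
  shows "\<Psi> (word_of (recoloured y) \<chi> y (sorted_list_of_set V)) = 0"
  using recoloured_block_colour[OF V]
proof
  assume "\<forall>i\<in>V. recoloured y i = 1"
  then show ?thesis by (rule Psi_recoloured_colour1_block[OF y V0 V])
next
  assume "\<forall>i\<in>V. recoloured y i = 2"
  with V vanish show ?thesis by (intro Psi_recoloured_colour2_block[OF y]) auto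
qed

lemma word_vanishes:
  assumes y: "admissible y" and V0: "V0 \<in> blocks2" "\<Phi> (block_word y V0) = 0"
    and dichotomy: "\<And>V. V \<in> blocks2 \<Longrightarrow> \<Phi> (block_word y V) = 0 \<or> (\<forall>i\<in>V. y i = (1, 0))"
  shows "\<Phi> (block_word y {1..n}) = 0"
proof -
  have units: "\<Phi> (block_word y V) = 1" if "V \<in> blocks2" "V \<subseteq> unit_blocks y" for V
    using that mem_unit_blocks[of _ y] blocks2_subset by (intro Phi_block_word_units[OF y]) auto
  have V0_U: "V0 \<inter> unit_blocks y = {}"
    using unit_blocks_saturated[of V0 y] units[OF V0(1)] V0 by (auto simp: blocks2_def)
  have vanish: "\<Phi> (block_word y V) = 0" if V: "V \<in> blocks2" "V \<inter> unit_blocks y = {}" for V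
  proof -
    have "V \<noteq> {}" using V(1) pi_co_nonempty by (auto simp: blocks2_def)
    moreover have "V \<subseteq> unit_blocks y" if "\<forall>i\<in>V. y i = (1, 0)"
      using V(1) that by (auto simp: unit_blocks_def)
    ultimately show ?thesis using dichotomy[OF V(1)] V(2) by blast
  qed
  have "\<Phi> (block_word y {1..n})
      = (\<Prod>V\<in>pi_co \<chi> (recoloured y) n. \<Phi> (word_of (recoloured y) \<chi> y (sorted_list_of_set V)))"
    unfolding Phi_recoloured_word[OF y] using Psi_recoloured_block[OF y V0(1) V0_U] vanish
    by (intro c_bifree_word_of[OF c_bifree n_pos valid_recoloured_word[OF y]]) blast
  also have "\<dots> = 0"
  proof -
    have "V0 \<in> pi_co \<chi> (recoloured y) n"
      using recoloured_colour2_blocks[of y] V0(1) V0_U by auto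
    moreover have "word_of (recoloured y) \<chi> y (sorted_list_of_set V0) = block_word y V0"
      using V0_U finite_subset[OF blocks2_subset[OF V0(1)]] unfolding block_word_def
      by (intro word_of_cong) (auto simp: recolour_def)
    ultimately show ?thesis using V0(2) finite_pi_co by (metis prod_zero_iff)
  qed
  finally show ?thesis .
qed

lemma active_block_exists:
  assumes "j \<in> active x"
  obtains V where "V \<in> blocks2" "j \<in> V"
proof -
  obtain V where V: "V \<in> pi_co \<chi> \<omega> n" "j \<in> V"
    using pi_co_covers[of j n \<chi> \<omega>] assms by (auto simp: active_def)
  have "\<omega> j = 2" using assms by (simp add: active_def)
  then have "\<forall>i\<in>V. \<omega> i = 2" using pi_co_constant[OF V(1) _ V(2)] by metis
  then show thesis using that V by (simp add: blocks2_def)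
qed

lemma shift_scalars_inactive_block:
  assumes "\<forall>i. i \<notin> active x \<longrightarrow> t i = 0" "V \<in> blocks2" "V \<inter> active x = {}" "i \<in> V"
  shows "shift_scalars x t i = (1, 0)"
proof -
  have "i \<notin> active x" using assms(3,4) by blast
  moreover have "i \<in> {1..n}" "\<omega> i = 2"
    using assms(2,4) blocks2_subset[OF assms(2)] by (auto simp: blocks2_def)
  ultimately have "x i = (1, 0)" "t i = 0" using assms(1) by (auto simp: active_def)
  then show ?thesis by (simp add: shift_scalars_def)
qed

lemma defect_zero: "admissible x \<Longrightarrow> defect x = 0"
proof (induction "card (active x)" arbitrary: x rule: less_induct)
  case less
  show ?case
  proof (cases "active x = {}")
    case True
    then show ?thesis using defect_without_active[OF less.prems] by simp
  next
    case False
    then obtain j where j: "j \<in> active x" by blast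
    obtain t where t: "\<forall>i. i \<notin> active x \<longrightarrow> t i = 0"
      and centred: "\<forall>V\<in>blocks2. V \<inter> active x \<noteq> {} \<longrightarrow> \<Phi> (block_word (shift_scalars x t) V) = 0"
      using exists_annihilating_shift[OF less.prems] by blast
    define y where "y = shift_scalars x t"
    have y: "admissible y" unfolding y_def using t by (intro admissible_shift_scalars[OF less.prems]) blast
    have "defect y = defect x"
      unfolding y_def using t by (intro defect_shift_invariant[OF less.prems less.hyps]) blast+
    obtain V0 where V0: "V0 \<in> blocks2" "j \<in> V0" using active_block_exists[OF j] .
    then have V0_zero: "\<Phi> (block_word y V0) = 0" using centred j by (auto simp: y_def)
    have "\<Phi> (block_word y V) = 0 \<or> (\<forall>i\<in>V. y i = (1, 0))" if "V \<in> blocks2" for V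
      using centred shift_scalars_inactive_block[OF t that] that unfolding y_def by blast
    then have "\<Phi> (block_word y {1..n}) = 0" by (rule word_vanishes[OF y V0(1) V0_zero])
    moreover have "(\<Prod>V\<in>blocks2. \<Phi> (block_word y V)) = 0"
      using V0(1) V0_zero finite_blocks2 by (metis prod_zero_iff)
    ultimately show ?thesis using \<open>defect y = defect x\<close> by (simp add: defect_def)
  qed
qed

lemma admissible_letters: "admissible (\<lambda>j. (0, a j))"
  unfolding admissible_def
proof (intro ballI conjI impI)
  fix j assume "j \<in> {1..n}" "\<omega> j = 2"
  then show "snd (0, a j) \<in> A 2 (\<chi> j)" using letters[of j] by simp
qed simp

lemma Phi_block_word_letters:
  assumes "V \<subseteq> {1..n}" "V \<noteq> {}"
  shows "\<Phi> (block_word (\<lambda>j. (0, a j)) V) = \<phi> (aprod a V)"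
proof -
  have "finite V" using assms(1) finite_subset by blast
  then have "block_word (\<lambda>j. (0, a j)) V \<noteq> []" "nonunit_word (block_word (\<lambda>j. (0, a j)) V)"
    using assms(2) by (auto simp: block_word_def word_of_def nonunit_word_def)
  then show ?thesis
    using Phi_extends_phi valid_block_word[OF admissible_letters assms(1)]
    by (simp add: phi_word_def aprod_def block_word_def word_of_def comp_def)
qed

lemma phi_factorisation:
  "\<phi> (aprod a {1..n}) = phiprod \<phi> a W * (\<Prod>V\<in>blocks2. \<phi> (aprod a V))"
proof -
  have "\<Phi> (block_word (\<lambda>j. (0, a j)) W) = phiprod \<phi> a W"
  proof (cases "W = {}")
    case True
    then show ?thesis using wfun_Nil[OF wfun_Phi] by (simp add: block_word_def word_of_def phiprod_def)
  next
    case False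
    moreover have "W \<subseteq> {1..n}" by (auto simp: W_def)
    ultimately show ?thesis using Phi_block_word_letters[of W] by (simp add: phiprod_def)
  qed
  moreover have "\<Phi> (block_word (\<lambda>j. (0, a j)) {1..n}) = \<phi> (aprod a {1..n})"
    using n_pos by (intro Phi_block_word_letters) auto
  moreover have "\<Phi> (block_word (\<lambda>j. (0, a j)) V) = \<phi> (aprod a V)" if "V \<in> blocks2" for V
    using blocks2_subset[OF that] pi_co_nonempty[of V \<chi> \<omega> n] that
    by (intro Phi_block_word_letters) (auto simp: blocks2_def)
  ultimately show ?thesis
    using defect_zero[OF admissible_letters] unfolding defect_def by simp
qed

end

theorem lemma2p5:
  fixes smul :: "complex \<Rightarrow> 'a::ring \<Rightarrow> 'a"
    and \<phi> :: "'a \<Rightarrow> complex"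
    and A :: "nat \<Rightarrow> side \<Rightarrow> 'a set"
    and n :: nat and \<chi> :: "nat \<Rightarrow> side" and \<omega> :: "nat \<Rightarrow> nat" and a :: "nat \<Rightarrow> 'a"
  assumes "nc_space smul \<phi>"
    and "\<And>k s. k \<in> {1, 2} \<Longrightarrow> subalgebra smul (A k s)"
    and "bimonotone_indep smul \<phi> A"
    and "n \<ge> 1"
    and "\<And>j. j \<in> {1..n} \<Longrightarrow> \<omega> j \<in> {1, 2}"
    and "\<And>j. j \<in> {1..n} \<Longrightarrow> a j \<in> A (\<omega> j) (\<chi> j)"
  shows "\<phi> (aprod a {1..n}) =
           phiprod \<phi> a {j \<in> {1..n}. \<omega> j = 1} *
           (\<Prod>V\<in>{V \<in> pi_co \<chi> \<omega> n. \<forall>j\<in>V. \<omega> j = 2}. \<phi> (aprod a V))"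
proof -
  obtain \<Phi> \<Psi> \<Phi>1 \<Delta>1 \<Phi>2 where
    Delta1: "\<forall>w. w \<noteq> [] \<and> valid_word {1} A w \<and> nonunit_word w \<longrightarrow> \<Phi>1 w = phi_word \<phi> w \<and> \<Delta>1 w = 0"
    and c_bifree: "c_bifree {1, 2} A smul \<Phi> \<Psi>
      (\<lambda>k. if k = 1 then \<Phi>1 else \<Phi>2) (\<lambda>k. if k = 1 then \<Delta>1 else \<Phi>2)"
    and Phi: "\<forall>w. w \<noteq> [] \<and> valid_word {1, 2} A w \<and> nonunit_word w \<longrightarrow> \<Phi> w = phi_word \<phi> w"
    using assms(3) unfolding bimonotone_indep_def by (elim exE conjE) (rule that; assumption)
  interpret bimonotone_setting smul \<phi> A n \<chi> \<omega> a \<Phi> \<Psi> \<Phi>1 \<Delta>1 \<Phi>2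
  proof unfold_locales
    show "calg smul" using assms(1) by (simp add: nc_space_def)
    show "0 \<in> A k s" if "k \<in> {1, 2}" for k s using assms(2)[OF that] by (simp add: subalgebra_def)
    show "\<omega> j = 1 \<or> \<omega> j = 2" if "j \<in> {1..n}" for j using assms(5)[OF that] by simp
    show "\<Delta>1 w = 0" if "w \<noteq> []" "valid_word {1} A w" "nonunit_word w" for w
      using Delta1 that by blast
    show "\<Phi> w = phi_word \<phi> w" if "w \<noteq> []" "valid_word {1, 2} A w" "nonunit_word w" for w
      using Phi that by blast
  qed (use assms(4,6) c_bifree in auto)
  show ?thesis using phi_factorisation unfolding W_def blocks2_def .
qed

end
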